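(* Fix $\mathbf{x}'\in\Omega$ and let $\mathbf{F}\in\mathbb{R}^{3\times2}$ have rank $2$. Then $W_{str}(\mathbf{x}',\mathbf{F})=0$ if and only if $\mathbf{F}^T\mathbf{F}=g$, where $$g=\lambda^2\,\mathbf{m}\otimes\mathbf{m}+\lambda^{-1}\,\mathbf{m}_\perp\otimes\mathbf{m}_\perp\in\mathbb{R}^{2\times2},$$ $\lambda=\big(\tfrac{s+1}{s_0+1}\big)^{1/3}$, and $\mathbf{m}_\perp\in\mathbb{S}^1$ is a unit vector perpendicular to $\mathbf{m}$.
   Context: Let $\Omega\subset\mathbb{R}^2$ be a bounded Lipschitz domain. At the point $\mathbf{x}'$ we are given scalars $s,s_0$ with $-1<s,s_0<\infty$ (values of given functions $s,s_0\in L^\infty(\Omega)$) and a unit vector $\mathbf{m}\in\mathbb{S}^1\subset\mathbb{R}^2$ (value at $\mathbf{x}'$ of the blueprinted director field). For $\mathbf{F}\in\mathbb{R}^{3\times2}$ of rank 2, let $\mathrm{I}(\mathbf{F})=\mathbf{F}^T\mathbf{F}$, $J(\mathbf{F})=\det\mathrm{I}(\mathbf{F})$, $C_{\mathbf{m}}(\mathbf{F})=\mathbf{m}\cdot\mathrm{I}(\mathbf{F})\mathbf{m}$, and define the stretching energy density $$W_{str}(\mathbf{x}',\mathbf{F})=\lambda\Big[\frac{1}{J(\mathbf{F})}+\frac{1}{s+1}\Big(\operatorname{tr}\mathrm{I}(\mathbf{F})+s_0\,C_{\mathbf{m}}(\mathbf{F})+s\,\frac{J(\mathbf{F})}{C_{\mathbf{m}}(\mathbf{F})}\Big)\Big]-3,\qquad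 \lambda=\Big(\frac{s+1}{s_0+1}\Big)^{1/3}.$$ *)

theory Defs
  imports "HOL-Analysis.Analysis"
begin

text \<open>Matrices in R^{3x2} are rendered as real^2^3 (3 rows, 2 columns).\<close>

definition first_ff :: "real^2^3 \<Rightarrow> real^2^2" where
  "first_ff F = transpose F ** F"

definition Jdet :: "real^2^3 \<Rightarrow> real" where
  "Jdet F = det (first_ff F)"

definition Cm :: "real^2 \<Rightarrow> real^2^3 \<Rightarrow> real" where
  "Cm m F = m \<bullet> (first_ff F *v m)"

definition lam :: "real \<Rightarrow> real \<Rightarrow> real" where
  "lam s s0 = ((s + 1) / (s0 + 1)) powr (1/3)"

definition W_str :: "real \<Rightarrow> real \<Rightarrow> real^2 \<Rightarrow> real^2^3 \<Rightarrow> real" where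
  "W_str s s0 m F = lam s s0 * (1 / Jdet F + 1 / (s + 1) *
      (trace (first_ff F) + s0 * Cm m F + s * Jdet F / Cm m F)) - 3"

definition outer :: "real^2 \<Rightarrow> real^2 \<Rightarrow> real^2^2" where
  "outer a b = (\<chi> i j. a $ i * b $ j)"

end

theory Submission
  imports Defs
begin

text \<open>In the orthonormal frame \<open>(m, m\<^sub>\<perp>)\<close> the first fundamental form \<open>I\<close> has entries
  \<open>a = C\<^sub>m\<close>, \<open>b\<close>, \<open>c\<close> with \<open>tr I = a + c\<close> and \<open>J = ac - b\<^sup>2\<close>. Writing \<open>u = a/\<lambda>\<^sup>2\<close> and
  \<open>v = \<lambda>J/a\<close>, the energy becomes \<open>(u + v + 1/(uv) - 3) + \<lambda>b\<^sup>2/((s+1)a)\<close>, a sum of two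
  nonnegative terms by AM-GM. It vanishes iff \<open>u = v = 1\<close> and \<open>b = 0\<close>, i.e. iff \<open>I\<close> is
  \<open>diag(\<lambda>\<^sup>2, 1/\<lambda>)\<close> in that frame.\<close>

lemma am_gm_inverse_product:
  fixes u v :: real
  assumes "0 < u" "0 < v"
  shows "3 \<le> u + v + 1 / (u * v)"
    and "u + v + 1 / (u * v) = 3 \<longleftrightarrow> u = 1 \<and> v = 1"
proof -
  define q where "q = sqrt (u * v)"
  have q: "0 < q" "q\<^sup>2 = u * v"
    using assms by (auto simp: q_def)
  have sos: "u + v + 1 / (u * v) - 3 = (sqrt u - sqrt v)\<^sup>2 + (q - 1)\<^sup>2 * (2 * q + 1) / q\<^sup>2"
    using assms q by (simp add: q_def power2_eq_square real_sqrt_mult field_simps)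
  have nonneg: "0 \<le> (q - 1)\<^sup>2 * (2 * q + 1) / q\<^sup>2"
    using q(1) by (intro divide_nonneg_pos mult_nonneg_nonneg) auto
  then show "3 \<le> u + v + 1 / (u * v)"
    using sos zero_le_power2[of "sqrt u - sqrt v"] by linarith
  show "u + v + 1 / (u * v) = 3 \<longleftrightarrow> u = 1 \<and> v = 1"
  proof
    assume "u + v + 1 / (u * v) = 3"
    then have "(sqrt u - sqrt v)\<^sup>2 = 0" "(q - 1)\<^sup>2 * (2 * q + 1) / q\<^sup>2 = 0"
      using sos nonneg zero_le_power2[of "sqrt u - sqrt v"] by linarith+
    then have "u = v" "q = 1"
      using q(1) by auto
    then have "u = v" "u * u = 1"
      using q(2) by auto
    then show "u = 1 \<and> v = 1"
      using assms(1) by (metis mult_le_cancel_left1 less_le nle_le)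
  qed simp
qed

lemma outer_mult_vec: "outer a b *v v = (b \<bullet> v) *\<^sub>R a"
  by (simp add: outer_def matrix_vector_mult_def inner_vec_def vec_eq_iff sum_distrib_left
      mult.commute mult.left_commute)

definition frame_matrix :: "real^2 \<Rightarrow> real^2 \<Rightarrow> real^2^2" where
  "frame_matrix u v = (\<chi> i j. if j = 1 then u $ i else v $ i)"

lemma column_frame_matrix [simp]:
  "column 1 (frame_matrix u v) = u" "column 2 (frame_matrix u v) = v"
  by (simp_all add: frame_matrix_def column_def vec_eq_iff)

lemma orthogonal_matrix_frame_matrix:
  assumes "norm u = 1" "norm v = 1" "u \<bullet> v = 0"
  shows "orthogonal_matrix (frame_matrix u v)"
  using assms unfolding orthogonal_matrix_orthonormal_columns
  by (auto simp: forall_2 orthogonal_def inner_commute)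

lemma congruence_entry:
  "(transpose P ** A ** P) $ i $ j = column i P \<bullet> (A *v column j P)"
proof -
  have "column j (A ** P) = A *v column j P"
    by (simp add: column_def matrix_matrix_mult_def matrix_vector_mult_def vec_eq_iff)
  moreover have "(transpose P ** Q) $ i $ j = column i P \<bullet> column j Q" for Q
    by (simp add: matrix_matrix_mult_def transpose_def column_def inner_vec_def)
  ultimately show ?thesis
    by (simp flip: matrix_mul_assoc)
qed

lemma symmetric_entry_swap:
  assumes "transpose A = A"
  shows "A $ i $ j = A $ j $ i"
proof -
  have "transpose A $ j $ i = A $ j $ i"
    using assms by simp
  then show ?thesis
    by (simp add: transpose_def)
qed

lemma symmetric_congruence:
  fixes A :: "real^'n^'n" and P :: "real^'m^'n"
  assumes "transpose A = A"
  shows "transpose (transpose P ** A ** P) = transpose P ** A ** P"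
  using assms by (simp add: matrix_transpose_mul matrix_mul_assoc)

lemma det_orthogonal_congruence:
  fixes P A :: "real^'n^'n"
  assumes "orthogonal_matrix P"
  shows "det (transpose P ** A ** P) = det A"
proof -
  have "det P * det P = 1"
    using det_orthogonal_matrix[OF assms] by auto
  then show ?thesis
    by (simp add: det_mul det_transpose)
qed

lemma trace_orthogonal_congruence:
  fixes P A :: "real^'n^'n"
  assumes "orthogonal_matrix P"
  shows "trace (transpose P ** A ** P) = trace A"
proof -
  have "trace (transpose P ** A ** P) = trace (A ** (P ** transpose P))"
    using trace_mul_sym[of "transpose P" "A ** P"] by (simp add: matrix_mul_assoc)
  also have "\<dots> = trace A"
    using assms by (simp add: orthogonal_matrix_def)
  finally show ?thesis .
qed

lemma orthogonal_congruence_eq_iff: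
  fixes P A B :: "real^'n^'n"
  assumes "orthogonal_matrix P"
  shows "transpose P ** A ** P = transpose P ** B ** P \<longleftrightarrow> A = B"
proof
  have "P ** (transpose P ** X ** P) ** transpose P = (P ** transpose P) ** X ** (P ** transpose P)"
    for X :: "real^'n^'n"
    by (simp add: matrix_mul_assoc)
  then have "P ** (transpose P ** X ** P) ** transpose P = X" for X :: "real^'n^'n"
    using assms by (simp add: orthogonal_matrix_def)
  then show "transpose P ** A ** P = transpose P ** B ** P \<Longrightarrow> A = B"
    by metis
qed simp

lemma gram_quadratic_form_pos:
  fixes F :: "real^'n^'m"
  assumes "inj ((*v) F)" and "v \<noteq> 0"
  shows "0 < v \<bullet> ((transpose F ** F) *v v)"
proof -
  have "F *v v \<noteq> 0"
    using assms by (metis injD matrix_vector_mult_0_right)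
  moreover have "v \<bullet> ((transpose F ** F) *v v) = (F *v v) \<bullet> (F *v v)"
    by (metis dot_lmul_matrix inner_commute matrix_vector_mul_assoc vector_transpose_matrix)
  ultimately show ?thesis
    by simp
qed

lemma det_pos_if_positive_definite_2:
  fixes A :: "real^2^2"
  assumes "transpose A = A" and "\<And>v. v \<noteq> 0 \<Longrightarrow> 0 < v \<bullet> (A *v v)"
  shows "0 < det A"
proof -
  have quad: "v \<bullet> (A *v v) = v$1 * (A$1$1 * v$1 + A$1$2 * v$2) + v$2 * (A$2$1 * v$1 + A$2$2 * v$2)"
    for v :: "real^2"
    by (simp add: inner_vec_def sum_2 matrix_vector_mult_def)
  have "vector [1, 0] \<noteq> (0 :: real^2)"
    by (metis vector_2(1) zero_index zero_neq_one)
  then have "0 < A$1$1"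
    using assms(2)[of "vector [1, 0]"] by (simp add: quad)
  moreover have "0 < A$1$1 * det A"
  proof -
    let ?w = "vector [A$1$2, - A$1$1] :: real^2"
    have "?w \<noteq> 0"
      using \<open>0 < A$1$1\<close> by (metis vector_2(2) zero_index neg_0_equal_iff_equal less_irrefl)
    then have "0 < ?w \<bullet> (A *v ?w)"
      by (rule assms(2))
    also have "?w \<bullet> (A *v ?w) = A$1$1 * det A"
      unfolding quad det_2 symmetric_entry_swap[OF assms(1), of 2 1] by (simp add: algebra_simps power2_eq_square)
    finally show ?thesis .
  qed
  ultimately show ?thesis
    by (simp add: zero_less_mult_iff)
qed

lemma lam_pos: "-1 < s \<Longrightarrow> -1 < s0 \<Longrightarrow> 0 < lam s s0"
  by (simp add: lam_def)

lemma lam_cube: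
  assumes "-1 < s" "-1 < s0"
  shows "(lam s s0) ^ 3 * (s0 + 1) = s + 1"
proof -
  have "(lam s s0) ^ 3 = ((s + 1) / (s0 + 1)) powr (real 3 * (1/3))"
    unfolding lam_def using assms by (subst powr_power) auto
  then show ?thesis
    using assms by simp
qed

lemma stretching_energy_decomposition:
  fixes a b c L s s0 :: real
  assumes "0 < a" "0 < a * c - b\<^sup>2" "0 < L" "L ^ 3 * (s0 + 1) = s + 1" "-1 < s"
  defines "J \<equiv> a * c - b\<^sup>2"
  shows "L * (1 / J + 1 / (s + 1) * ((a + c) + s0 * a + s * J / a)) - 3
       = (a / L\<^sup>2 + L * J / a + 1 / ((a / L\<^sup>2) * (L * J / a)) - 3) + L * b\<^sup>2 / (a * (s + 1))"
proof -
  have "s + 1 \<noteq> 0"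
    using assms(5) by simp
  have s0: "s0 + 1 = (s + 1) / L ^ 3"
    using assms(3,4) by (simp add: field_simps)
  have "c = (J + b\<^sup>2) / a"
    using assms(1) by (simp add: J_def field_simps)
  then have "(a + c) + s0 * a + s * J / a = (s0 + 1) * a + (s + 1) * (J / a) + b\<^sup>2 / a"
    using assms(1) by (simp add: field_simps)
  also have "\<dots> = (s + 1) * (a / L ^ 3 + J / a) + b\<^sup>2 / a"
    unfolding s0 using assms(3) by (simp add: field_simps)
  finally have bracket: "(a + c) + s0 * a + s * J / a = (s + 1) * (a / L ^ 3 + J / a) + b\<^sup>2 / a" .
  have "L * (1 / J + 1 / (s + 1) * ((a + c) + s0 * a + s * J / a))
      = L / J + L * (a / L ^ 3) + L * J / a + L * b\<^sup>2 / (a * (s + 1))"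
  proof -
    have "1 / (s + 1) * ((s + 1) * X + Z) = X + Z / (s + 1)" for X Z
      using \<open>s + 1 \<noteq> 0\<close> by (simp add: field_simps)
    then show ?thesis
      unfolding bracket by (simp add: distrib_left) (simp add: algebra_simps)
  qed
  moreover have "1 / ((a / L\<^sup>2) * (L * J / a)) = L / J" "a / L\<^sup>2 = L * (a / L ^ 3)"
    using assms(1,3) by (simp_all add: field_simps power2_eq_square power3_eq_cube)
  ultimately show ?thesis
    by simp
qed

lemma stretching_energy_eq_zero_iff:
  fixes a b c L s s0 :: real
  assumes "0 < a" "0 < a * c - b\<^sup>2" "0 < L" "L ^ 3 * (s0 + 1) = s + 1" "-1 < s"
  shows "L * (1 / (a * c - b\<^sup>2) + 1 / (s + 1) * ((a + c) + s0 * a + s * (a * c - b\<^sup>2) / a)) - 3 = 0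
     \<longleftrightarrow> a = L\<^sup>2 \<and> b = 0 \<and> c = 1 / L"
proof -
  define u where "u = a / L\<^sup>2"
  define v where "v = L * (a * c - b\<^sup>2) / a"
  have "0 < u" "0 < v"
    using assms by (simp_all add: u_def v_def)
  have "0 \<le> L * b\<^sup>2 / (a * (s + 1))"
    using assms by simp
  then have "L * (1 / (a * c - b\<^sup>2) + 1 / (s + 1) * ((a + c) + s0 * a + s * (a * c - b\<^sup>2) / a)) - 3 = 0
      \<longleftrightarrow> u + v + 1 / (u * v) = 3 \<and> L * b\<^sup>2 / (a * (s + 1)) = 0"
    using stretching_energy_decomposition[OF assms] am_gm_inverse_product(1)[OF \<open>0 < u\<close> \<open>0 < v\<close>]
    unfolding u_def v_def by linarith
  also have "\<dots> \<longleftrightarrow> u = 1 \<and> v = 1 \<and> b = 0"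
    using am_gm_inverse_product(2)[OF \<open>0 < u\<close> \<open>0 < v\<close>] assms by simp
  also have "\<dots> \<longleftrightarrow> a = L\<^sup>2 \<and> b = 0 \<and> c = 1 / L"
  proof (cases "a = L\<^sup>2 \<and> b = 0")
    case True
    then have "v = L * c"
      using assms(3) by (simp add: v_def power2_eq_square)
    then show ?thesis
      using True assms(3) by (auto simp: u_def field_simps)
  next
    case False
    then show ?thesis
      using assms(3) by (auto simp: u_def)
  qed
  finally show ?thesis .
qed

lemma first_ff_symmetric: "transpose (first_ff F) = first_ff F"
  by (simp add: first_ff_def matrix_transpose_mul)

lemma first_ff_in_frame:
  fixes F :: "real^2^3" and m p :: "real^2"
  assumes "norm m = 1" "norm p = 1" "m \<bullet> p = 0" "rank F = 2"
  defines "B \<equiv> transpose (frame_matrix m p) ** first_ff F ** frame_matrix m p"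
  shows "Cm m F = B $ 1 $ 1"
    and "trace (first_ff F) = B $ 1 $ 1 + B $ 2 $ 2"
    and "Jdet F = B $ 1 $ 1 * B $ 2 $ 2 - (B $ 1 $ 2)\<^sup>2"
    and "0 < B $ 1 $ 1"
    and "0 < Jdet F"
proof -
  have P: "orthogonal_matrix (frame_matrix m p)"
    using assms(1-3) by (rule orthogonal_matrix_frame_matrix)
  have pos_def: "0 < v \<bullet> (first_ff F *v v)" if "v \<noteq> 0" for v
    using gram_quadratic_form_pos[OF _ that] assms(4) full_rank_injective[of F]
    by (simp add: first_ff_def)
  have B21: "B $ 2 $ 1 = B $ 1 $ 2"
    unfolding B_def by (rule symmetric_entry_swap[OF symmetric_congruence[OF first_ff_symmetric]])
  show "Cm m F = B $ 1 $ 1"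
    by (simp add: Cm_def B_def congruence_entry)
  show "trace (first_ff F) = B $ 1 $ 1 + B $ 2 $ 2"
    using trace_orthogonal_congruence[OF P] by (simp add: B_def trace_def sum_2)
  show "Jdet F = B $ 1 $ 1 * B $ 2 $ 2 - (B $ 1 $ 2)\<^sup>2"
    using det_orthogonal_congruence[OF P, of "first_ff F"]
    by (simp add: Jdet_def det_2 B21 power2_eq_square flip: B_def)
  show "0 < Jdet F"
    unfolding Jdet_def using first_ff_symmetric pos_def by (rule det_pos_if_positive_definite_2)
  have "m \<noteq> 0"
    using assms(1) by auto
  then show "0 < B $ 1 $ 1"
    using pos_def by (simp add: B_def congruence_entry)
qed

lemma symmetric_eq_frame_diagonal_iff:
  fixes A :: "real^2^2" and m p :: "real^2"
  assumes "transpose A = A" "norm m = 1" "norm p = 1" "m \<bullet> p = 0"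
  defines "B \<equiv> transpose (frame_matrix m p) ** A ** frame_matrix m p"
  shows "A = \<alpha> *\<^sub>R outer m m + \<beta> *\<^sub>R outer p p \<longleftrightarrow> B $ 1 $ 1 = \<alpha> \<and> B $ 1 $ 2 = 0 \<and> B $ 2 $ 2 = \<beta>"
proof -
  let ?P = "frame_matrix m p"
  have "A = \<alpha> *\<^sub>R outer m m + \<beta> *\<^sub>R outer p p
      \<longleftrightarrow> B = transpose ?P ** (\<alpha> *\<^sub>R outer m m + \<beta> *\<^sub>R outer p p) ** ?P"
    unfolding B_def using assms(2-4)
    by (rule orthogonal_congruence_eq_iff[OF orthogonal_matrix_frame_matrix, symmetric])
  also have "\<dots> \<longleftrightarrow> B $ 1 $ 1 = \<alpha> \<and> B $ 1 $ 2 = 0 \<and> B $ 2 $ 2 = \<beta>"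
    using assms(2-4) symmetric_entry_swap[OF symmetric_congruence[OF assms(1)], of ?P 2 1]
    by (auto simp: B_def vec_eq_iff forall_2 congruence_entry matrix_vector_mult_add_rdistrib
        outer_mult_vec inner_commute norm_eq_1 simp flip: scaleR_matrix_vector_assoc)
  finally show ?thesis .
qed

theorem proposition2p3:
  fixes s s0 :: real and m mperp :: "real^2" and F :: "real^2^3"
  assumes "-1 < s" and "-1 < s0"
    and "norm m = 1" and "norm mperp = 1" and "m \<bullet> mperp = 0"
    and "rank F = 2"
  shows "W_str s s0 m F = 0 \<longleftrightarrow>
    transpose F ** F = (lam s s0)\<^sup>2 *\<^sub>R outer m m + inverse (lam s s0) *\<^sub>R outer mperp mperp"
proof -
  define L where "L = lam s s0"
  define B where "B = transpose (frame_matrix m mperp) ** first_ff F ** frame_matrix m mperp"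
  note frame = first_ff_in_frame[OF assms(3-6), folded B_def]
  have "W_str s s0 m F = 0 \<longleftrightarrow> B $ 1 $ 1 = L\<^sup>2 \<and> B $ 1 $ 2 = 0 \<and> B $ 2 $ 2 = 1 / L"
    using stretching_energy_eq_zero_iff[OF frame(4) _ lam_pos lam_cube] frame assms(1,2)
    by (simp add: W_str_def L_def)
  moreover have "first_ff F = L\<^sup>2 *\<^sub>R outer m m + inverse L *\<^sub>R outer mperp mperp
      \<longleftrightarrow> B $ 1 $ 1 = L\<^sup>2 \<and> B $ 1 $ 2 = 0 \<and> B $ 2 $ 2 = 1 / L"
    using symmetric_eq_frame_diagonal_iff[OF first_ff_symmetric[of F] assms(3-5), folded B_def]
    by (simp add: inverse_eq_divide)
  ultimately show ?thesis
    by (simp add: first_ff_def L_def)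
qed

end
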